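(* Let $\Lambda$ be a finitely aligned left cancellative small category. (1) Suppose $s=\bigcup_{i=1}^n\alpha_i\beta_i^*\in S_\Lambda$ with $\alpha_i,\beta_i\in\Lambda$, and suppose $e$ is an idempotent of $S_\Lambda$ with $e\leqslant a^*a$ where $a=\alpha_j\beta_j^*$ for some $1\le j\le n$. Then $ses^*=aea^*$. (2) If $\xi\subseteq E(S_\Lambda)$ is a tight filter, $\alpha_1,\dots,\alpha_n\in S_\Lambda$, and $\bigcup_{i=1}^n\alpha_i\alpha_i^*\in\xi$, then $\alpha_j\alpha_j^*\in\xi$ for some $1\le j\le n$.
   Context: A small category $\Lambda$ (objects $\Lambda^0$, range $r$, source $s$, composition $\alpha\beta$ when $s(\alpha)=r(\beta)$) is left cancellative if $\alpha\beta=\alpha\gamma$ implies $\beta=\gamma$. Write $\alpha\Lambda=\{\alpha\beta:s(\alpha)=r(\beta)\}$. $\Lambda$ is finitely aligned if for all $\alpha,\beta$ there is a finite (possibly empty) $F\subseteq\Lambda$ with $\alpha\Lambda\cap\beta\Lambda=\bigcup_{f\in F}f\Lambda$. Each $\alpha\in\Lambda$ is regarded as the partial bijection $s(\alpha)\Lambda\to\alpha\Lambda$, $\beta\mapsto\alpha\beta$, in the symmetric inverse monoid $\mathcal{I}(\Lambda)$ (partial bijections of $\Lambda$ under composition on the largest possible domain, with zero the empty map); $\alpha^*$ is its inverse $\alpha\beta\mapsto\beta$. $S_\Lambda$ is the inverse subsemigroup of $\mathcal{I}(\Lambda)$ generated by $\{\alpha:\alpha\in\Lambda\}$, and $E(S_\Lambda)$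 its idempotents (identity maps on subsets); products like $\alpha\beta^*$ denote composition, and unions are unions of partial maps (graphs). The order on idempotents is $e\leqslant f$ iff $ef=e$. A filter is a nonempty proper subset of $E(S_\Lambda)$ closed under products and upward closed; a tight filter is a filter in the closure (in $\{0,1\}^{E(S_\Lambda)}$) of the set of maximal filters. *)

theory Defs
  imports "HOL-Analysis.Analysis"
begin

text \<open>Objects are identified with
  their identity morphisms: the object set is rng ` L.\<close>

definition small_category ::
  "'a set \<Rightarrow> ('a \<Rightarrow> 'a) \<Rightarrow> ('a \<Rightarrow> 'a) \<Rightarrow> ('a \<Rightarrow> 'a \<Rightarrow> 'a) \<Rightarrow> bool" where
  "small_category L rng src cmp \<longleftrightarrow>
     (\<forall>a\<in>L. rng a \<in> L \<and> src a \<in> L) \<and>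
     (\<forall>a\<in>L. rng (rng a) = rng a \<and> src (rng a) = rng a \<and>
              rng (src a) = src a \<and> src (src a) = src a) \<and>
     (\<forall>a\<in>L. \<forall>b\<in>L. src a = rng b \<longrightarrow>
        cmp a b \<in> L \<and> rng (cmp a b) = rng a \<and> src (cmp a b) = src b) \<and>
     (\<forall>a\<in>L. \<forall>b\<in>L. \<forall>c\<in>L. src a = rng b \<longrightarrow> src b = rng c \<longrightarrow>
        cmp (cmp a b) c = cmp a (cmp b c)) \<and>
     (\<forall>a\<in>L. cmp (rng a) a = a \<and> cmp a (src a) = a)"

definition left_cancellative ::
  "'a set \<Rightarrow> ('a \<Rightarrow> 'a) \<Rightarrow> ('a \<Rightarrow> 'a) \<Rightarrow> ('a \<Rightarrow> 'a \<Rightarrow> 'a) \<Rightarrow> bool" where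
  "left_cancellative L rng src cmp \<longleftrightarrow>
     (\<forall>a\<in>L. \<forall>b\<in>L. \<forall>c\<in>L. src a = rng b \<longrightarrow> src a = rng c \<longrightarrow>
        cmp a b = cmp a c \<longrightarrow> b = c)"

definition right_ideal ::
  "'a set \<Rightarrow> ('a \<Rightarrow> 'a) \<Rightarrow> ('a \<Rightarrow> 'a) \<Rightarrow> ('a \<Rightarrow> 'a \<Rightarrow> 'a) \<Rightarrow> 'a \<Rightarrow> 'a set" where
  "right_ideal L rng src cmp a = {cmp a b | b. b \<in> L \<and> src a = rng b}"

definition finitely_aligned ::
  "'a set \<Rightarrow> ('a \<Rightarrow> 'a) \<Rightarrow> ('a \<Rightarrow> 'a) \<Rightarrow> ('a \<Rightarrow> 'a \<Rightarrow> 'a) \<Rightarrow> bool" where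
  "finitely_aligned L rng src cmp \<longleftrightarrow>
     (\<forall>a\<in>L. \<forall>b\<in>L. \<exists>F. finite F \<and> F \<subseteq> L \<and>
        right_ideal L rng src cmp a \<inter> right_ideal L rng src cmp b =
        (\<Union>f\<in>F. right_ideal L rng src cmp f))"

definition emb ::
  "'a set \<Rightarrow> ('a \<Rightarrow> 'a) \<Rightarrow> ('a \<Rightarrow> 'a) \<Rightarrow> ('a \<Rightarrow> 'a \<Rightarrow> 'a) \<Rightarrow> 'a \<Rightarrow> ('a \<rightharpoonup> 'a)" where
  "emb L rng src cmp a = (\<lambda>b. if b \<in> L \<and> rng b = src a then Some (cmp a b) else None)"

definition pinv :: "('a \<rightharpoonup> 'a) \<Rightarrow> ('a \<rightharpoonup> 'a)" where
  "pinv f = (\<lambda>y. if \<exists>x. f x = Some y then Some (SOME x. f x = Some y) else None)"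

text \<open>S_\<Lambda>: inverse subsemigroup of I(\<Lambda>) generated by the \<alpha>'s
  (= subsemigroup generated by the \<alpha>'s and the \<alpha>*'s), product = composition of partial maps.\<close>
inductive_set S_Lambda ::
  "'a set \<Rightarrow> ('a \<Rightarrow> 'a) \<Rightarrow> ('a \<Rightarrow> 'a) \<Rightarrow> ('a \<Rightarrow> 'a \<Rightarrow> 'a) \<Rightarrow> ('a \<rightharpoonup> 'a) set"
  for L rng src cmp where
  gen: "a \<in> L \<Longrightarrow> emb L rng src cmp a \<in> S_Lambda L rng src cmp"
| gen_inv: "a \<in> L \<Longrightarrow> pinv (emb L rng src cmp a) \<in> S_Lambda L rng src cmp"
| mult: "f \<in> S_Lambda L rng src cmp \<Longrightarrow> g \<in> S_Lambda L rng src cmp \<Longrightarrow>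
          (f \<circ>\<^sub>m g) \<in> S_Lambda L rng src cmp"

definition idempotents :: "('a \<rightharpoonup> 'a) set \<Rightarrow> ('a \<rightharpoonup> 'a) set" where
  "idempotents S = {e \<in> S. e \<circ>\<^sub>m e = e}"

definition idem_le :: "('a \<rightharpoonup> 'a) \<Rightarrow> ('a \<rightharpoonup> 'a) \<Rightarrow> bool" where
  "idem_le e f \<longleftrightarrow> e \<circ>\<^sub>m f = e"

definition is_filter :: "('a \<rightharpoonup> 'a) set \<Rightarrow> ('a \<rightharpoonup> 'a) set \<Rightarrow> bool" where
  "is_filter E \<xi> \<longleftrightarrow> \<xi> \<noteq> {} \<and> \<xi> \<subseteq> E \<and> \<xi> \<noteq> E \<and>
     (\<forall>e\<in>\<xi>. \<forall>f\<in>\<xi>. e \<circ>\<^sub>m f \<in> \<xi>) \<and>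
     (\<forall>e\<in>\<xi>. \<forall>f\<in>E. idem_le e f \<longrightarrow> f \<in> \<xi>)"

definition is_maximal_filter :: "('a \<rightharpoonup> 'a) set \<Rightarrow> ('a \<rightharpoonup> 'a) set \<Rightarrow> bool" where
  "is_maximal_filter E \<xi> \<longleftrightarrow> is_filter E \<xi> \<and> (\<forall>\<eta>. is_filter E \<eta> \<longrightarrow> \<xi> \<subseteq> \<eta> \<longrightarrow> \<eta> = \<xi>)"

text \<open>Subsets of E identified with points of {0,1}^E (product of discrete spaces).\<close>
definition char_fun :: "('a \<rightharpoonup> 'a) set \<Rightarrow> ('a \<rightharpoonup> 'a) set \<Rightarrow> (('a \<rightharpoonup> 'a) \<Rightarrow> bool)" where
  "char_fun E \<xi> = restrict (\<lambda>e. e \<in> \<xi>) E"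

definition is_tight_filter :: "('a \<rightharpoonup> 'a) set \<Rightarrow> ('a \<rightharpoonup> 'a) set \<Rightarrow> bool" where
  "is_tight_filter E \<xi> \<longleftrightarrow> is_filter E \<xi> \<and>
     char_fun E \<xi> \<in> (product_topology (\<lambda>_. discrete_topology (UNIV::bool set)) E) closure_of
                      (char_fun E ` {\<eta>. is_maximal_filter E \<eta>})"

end

theory Submission
  imports Defs
begin

text \<open>By left cancellativity every element of S_\<Lambda> is a partial injection, so its idempotents
  are partial identities. (1) A summand a of t agrees with t on dom a, and conjugating an
  idempotent e \<le> a*a by t or by a yields in both cases the identity on the image of dom e.
  (2) The hypothesis says that the range idempotents p_j = \<alpha>_j \<alpha>_j* cover u. A maximal
  filter containing u contains some p_j: otherwise maximality separates each p_j from a fixed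
  idempotent h outside the filter by an element of the filter, and the product of these
  elements with u lies below h. "Contains u but no p_j" is an open condition in {0,1}^E,
  so it passes from the maximal filters to their limits, the tight filters.\<close>

lemma map_eqI: "(\<And>x y. f x = Some y \<longleftrightarrow> g x = Some y) \<Longrightarrow> f = g"
  by (rule ext) (metis not_Some_eq)

lemma inj_on_domD: "inj_on f (dom f) \<Longrightarrow> f x = Some z \<Longrightarrow> f y = Some z \<Longrightarrow> x = y"
  by (metis domI inj_onD)

lemma inj_on_dom_map_le:
  assumes "inj_on g (dom g)" and "f \<subseteq>\<^sub>m g"
  shows "inj_on f (dom f)"
proof (rule inj_onI)
  fix x y assume "x \<in> dom f" and "y \<in> dom f" and "f x = f y"
  moreover have "dom f \<subseteq> dom g" using assms(2) by (rule map_le_implies_dom_le)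
  ultimately show "x = y"
    using assms unfolding map_le_def by (metis inj_onD subsetD)
qed

lemma pinv_SomeD: "pinv f y = Some x \<Longrightarrow> f x = Some y"
  unfolding pinv_def by (metis (mono_tags, lifting) option.distinct(1) option.inject someI_ex)

lemma pinv_Some_iff:
  assumes "inj_on f (dom f)"
  shows "pinv f y = Some x \<longleftrightarrow> f x = Some y"
proof
  assume fx: "f x = Some y"
  then have ex: "\<exists>x. f x = Some y" by blast
  then have "f (SOME x. f x = Some y) = Some y" by (rule someI_ex)
  then have "(SOME x. f x = Some y) = x" using fx by (rule inj_on_domD[OF assms])
  with ex show "pinv f y = Some x" by (simp add: pinv_def)
qed (rule pinv_SomeD)

lemma inj_on_pinv: "inj_on (pinv f) (dom (pinv f))"
proof (rule inj_onI)
  fix x y assume "x \<in> dom (pinv f)" and "pinv f x = pinv f y"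
  then obtain z where "pinv f x = Some z" and "pinv f y = Some z" by (metis domD)
  then have "f z = Some x" and "f z = Some y" by (blast dest: pinv_SomeD)+
  then show "x = y" by simp
qed

lemma pinv_pinv: "inj_on f (dom f) \<Longrightarrow> pinv (pinv f) = f"
  by (rule map_eqI) (simp add: pinv_Some_iff inj_on_pinv)

lemma inj_on_map_comp:
  assumes "inj_on f (dom f)" and "inj_on g (dom g)"
  shows "inj_on (f \<circ>\<^sub>m g) (dom (f \<circ>\<^sub>m g))"
proof (rule inj_onI)
  fix x y assume "x \<in> dom (f \<circ>\<^sub>m g)" "y \<in> dom (f \<circ>\<^sub>m g)" "(f \<circ>\<^sub>m g) x = (f \<circ>\<^sub>m g) y"
  then obtain v w z where "g x = Some v" "g y = Some w" "f v = Some z" "f w = Some z"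
    by (auto simp: map_comp_Some_iff)
  then show "x = y" using assms by (metis inj_on_domD)
qed

lemma pinv_map_comp:
  assumes "inj_on f (dom f)" and "inj_on g (dom g)"
  shows "pinv (f \<circ>\<^sub>m g) = pinv g \<circ>\<^sub>m pinv f"
  by (rule map_eqI)
    (auto simp: map_comp_Some_iff pinv_Some_iff assms inj_on_map_comp[OF assms])

lemma dom_pinv: "dom (pinv f) = ran f"
  by (auto simp: pinv_def ran_def split: if_splits)

lemma map_comp_pinv: "f \<circ>\<^sub>m pinv f = Some |` ran f"
proof (rule map_eqI)
  fix y z
  show "(f \<circ>\<^sub>m pinv f) y = Some z \<longleftrightarrow> (Some |` ran f) y = Some z"
  proof
    assume "(f \<circ>\<^sub>m pinv f) y = Some z"
    then obtain x where "pinv f y = Some x" and "f x = Some z"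
      by (auto simp: map_comp_Some_iff)
    then show "(Some |` ran f) y = Some z" by (metis pinv_SomeD option.inject ranI restrict_in)
  next
    assume "(Some |` ran f) y = Some z"
    then have "y \<in> dom (pinv f)" and "z = y"
      by (auto simp: dom_pinv restrict_map_def split: if_splits)
    then show "(f \<circ>\<^sub>m pinv f) y = Some z" by (auto dest: pinv_SomeD)
  qed
qed

lemma pinv_map_comp_self:
  assumes "inj_on f (dom f)"
  shows "pinv f \<circ>\<^sub>m f = Some |` dom f"
  by (rule map_eqI)
    (auto simp: map_comp_Some_iff pinv_Some_iff[OF assms] restrict_map_def
      dest: inj_on_domD[OF assms])

lemma map_comp_restrict_Some: "f \<circ>\<^sub>m (Some |` A) = f |` A"
  by (auto simp: fun_eq_iff restrict_map_def)

lemma restrict_Some_map_comp: "(Some |` A) \<circ>\<^sub>m (Some |` B) = Some |` (A \<inter> B)"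
  by (simp add: map_comp_restrict_Some)

lemma idem_le_restrict_Some_iff: "idem_le e (Some |` A) \<longleftrightarrow> dom e \<subseteq> A"
  unfolding idem_le_def map_comp_restrict_Some
  by (auto simp: fun_eq_iff restrict_map_def) (metis domIff subsetD)

lemma idempotent_inj_on_eq_restrict_Some:
  assumes "inj_on e (dom e)" and "e \<circ>\<^sub>m e = e"
  shows "e = Some |` dom e"
proof -
  have "e x = Some x" if "e x = Some y" for x y
  proof -
    have "e y = Some y" using that assms(2) by (metis map_comp_simps(2))
    then have "y = x" using that by (rule inj_on_domD[OF assms(1)])
    with that show ?thesis by simp
  qed
  then show ?thesis by (auto simp: fun_eq_iff restrict_map_def)
qed

lemma conjugate_restrict_Some:
  "inj_on t (dom t) \<Longrightarrow> t \<circ>\<^sub>m (Some |` A) \<circ>\<^sub>m pinv t = Some |` ran (t |` A)"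
  by (rule map_eqI)
    (auto simp: map_comp_Some_iff pinv_Some_iff restrict_map_def ran_def split: if_splits)

lemma conjugate_idempotent_map_le:
  assumes "inj_on t (dom t)" and "a \<subseteq>\<^sub>m t" and "e = Some |` dom e" and "dom e \<subseteq> dom a"
  shows "t \<circ>\<^sub>m e \<circ>\<^sub>m pinv t = a \<circ>\<^sub>m e \<circ>\<^sub>m pinv a"
proof -
  have "t |` dom e = a |` dom e"
  proof (rule ext)
    fix x
    show "(t |` dom e) x = (a |` dom e) x"
      using assms(2,4) unfolding map_le_def by (metis restrict_in restrict_out subsetD)
  qed
  moreover have "inj_on a (dom a)" using assms(1,2) by (rule inj_on_dom_map_le)
  ultimately show ?thesis
    using assms(1,3) by (metis conjugate_restrict_Some)
qed

lemma map_le_iff_graph_subset: "f \<subseteq>\<^sub>m g \<longleftrightarrow> Map.graph f \<subseteq> Map.graph g"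
  unfolding map_le_def Map.graph_def by (force simp: dom_def)

lemma graph_UN_imp_map_le:
  "Map.graph t = (\<Union>i\<in>I. Map.graph (c i)) \<Longrightarrow> j \<in> I \<Longrightarrow> c j \<subseteq>\<^sub>m t"
  unfolding map_le_iff_graph_subset by blast

lemma graph_UN_imp_dom_UN:
  assumes "Map.graph u = (\<Union>i\<in>I. Map.graph (c i))"
  shows "dom u = (\<Union>i\<in>I. dom (c i))"
proof -
  have "fst ` Map.graph u = (\<Union>i\<in>I. fst ` Map.graph (c i))"
    using assms by (simp add: image_UN)
  then show ?thesis by (simp only: fst_graph_eq_dom)
qed

lemma inj_on_emb:
  assumes "left_cancellative L rng src cmp" and "a \<in> L"
  shows "inj_on (emb L rng src cmp a) (dom (emb L rng src cmp a))"
proof (rule inj_onI)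
  fix x y
  assume "x \<in> dom (emb L rng src cmp a)" and "y \<in> dom (emb L rng src cmp a)"
    and "emb L rng src cmp a x = emb L rng src cmp a y"
  then have "x \<in> L" "y \<in> L" "rng x = src a" "rng y = src a" "cmp a x = cmp a y"
    by (auto simp: emb_def split: if_splits)
  then show "x = y" using assms unfolding left_cancellative_def by metis
qed

lemma S_Lambda_inj_on:
  assumes "left_cancellative L rng src cmp" and "f \<in> S_Lambda L rng src cmp"
  shows "inj_on f (dom f)"
  using assms(2)
  by induction (simp_all add: inj_on_emb[OF assms(1)] inj_on_pinv inj_on_map_comp)

lemma S_Lambda_pinv:
  assumes "left_cancellative L rng src cmp" and "f \<in> S_Lambda L rng src cmp"
  shows "pinv f \<in> S_Lambda L rng src cmp"
  using assms(2)
proof induction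
  case (gen a)
  then show ?case by (rule S_Lambda.gen_inv)
next
  case (gen_inv a)
  then show ?case by (simp add: pinv_pinv inj_on_emb[OF assms(1)] S_Lambda.gen)
next
  case (mult f g)
  then show ?case by (simp add: pinv_map_comp S_Lambda_inj_on[OF assms(1)] S_Lambda.mult)
qed

lemma S_Lambda_range_idempotent:
  assumes "left_cancellative L rng src cmp" and "f \<in> S_Lambda L rng src cmp"
  shows "f \<circ>\<^sub>m pinv f \<in> idempotents (S_Lambda L rng src cmp)"
proof -
  have "f \<circ>\<^sub>m pinv f \<in> S_Lambda L rng src cmp"
    using assms by (simp add: S_Lambda.mult S_Lambda_pinv)
  moreover have "(f \<circ>\<^sub>m pinv f) \<circ>\<^sub>m (f \<circ>\<^sub>m pinv f) = f \<circ>\<^sub>m pinv f"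
    by (simp add: map_comp_pinv restrict_Some_map_comp)
  ultimately show ?thesis by (simp add: idempotents_def)
qed

lemma idempotents_S_Lambda_eq_restrict_Some:
  assumes "left_cancellative L rng src cmp" and "e \<in> idempotents (S_Lambda L rng src cmp)"
  shows "e = Some |` dom e"
  using assms(2) unfolding idempotents_def
  by (blast intro: idempotent_inj_on_eq_restrict_Some S_Lambda_inj_on[OF assms(1)])

lemma conjugate_idempotent_by_graph_component:
  assumes "left_cancellative L rng src cmp" and "t \<in> S_Lambda L rng src cmp"
    and "Map.graph t = (\<Union>i\<in>I. Map.graph (c i))" and "j \<in> I"
    and "e \<in> idempotents (S_Lambda L rng src cmp)" and "idem_le e (pinv (c j) \<circ>\<^sub>m c j)"
  shows "t \<circ>\<^sub>m e \<circ>\<^sub>m pinv t = c j \<circ>\<^sub>m e \<circ>\<^sub>m pinv (c j)"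
proof (rule conjugate_idempotent_map_le)
  show "inj_on t (dom t)" using assms(1,2) by (rule S_Lambda_inj_on)
  show "c j \<subseteq>\<^sub>m t" using assms(3,4) by (rule graph_UN_imp_map_le)
  with \<open>inj_on t (dom t)\<close> have "inj_on (c j) (dom (c j))" by (rule inj_on_dom_map_le)
  then show "dom e \<subseteq> dom (c j)"
    using assms(6) by (simp add: pinv_map_comp_self idem_le_restrict_Some_iff)
  show "e = Some |` dom e" using assms(1,5) by (rule idempotents_S_Lambda_eq_restrict_Some)
qed

lemma is_filterD:
  assumes "is_filter E \<xi>"
  shows "\<xi> \<subseteq> E" and "\<xi> \<noteq> E"
    and "e \<in> \<xi> \<Longrightarrow> f \<in> \<xi> \<Longrightarrow> e \<circ>\<^sub>m f \<in> \<xi>"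
    and "e \<in> \<xi> \<Longrightarrow> f \<in> E \<Longrightarrow> idem_le e f \<Longrightarrow> f \<in> \<xi>"
  using assms unfolding is_filter_def by blast+

lemma maximal_filter_is_filter: "is_maximal_filter E \<eta> \<Longrightarrow> is_filter E \<eta>"
  by (simp add: is_maximal_filter_def)

lemma tight_filter_maximal_approximant:
  assumes tight: "is_tight_filter E \<xi>" and "u \<in> \<xi>" and "finite J" and "p ` J \<subseteq> E"
    and "p ` J \<inter> \<xi> = {}"
  shows "\<exists>\<eta>. is_maximal_filter E \<eta> \<and> u \<in> \<eta> \<and> p ` J \<inter> \<eta> = {}"
proof -
  let ?X = "product_topology (\<lambda>_. discrete_topology (UNIV :: bool set)) E"
  have closure: "char_fun E \<xi> \<in> ?X closure_of (char_fun E ` {\<eta>. is_maximal_filter E \<eta>})"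
    using tight by (simp add: is_tight_filter_def)
  have "u \<in> E" using tight \<open>u \<in> \<xi>\<close> is_filterD(1) unfolding is_tight_filter_def by blast
  have cylinder_open: "openin ?X {f \<in> topspace ?X. f k \<in> {b}}" if "k \<in> E" for k b
    by (rule openin_continuous_map_preimage[OF continuous_map_product_projection[OF that]]) simp
  define U where "U = {f \<in> topspace ?X. f u \<in> {True}}
    \<inter> ((\<Inter>j\<in>J. {f \<in> topspace ?X. f (p j) \<in> {False}}) \<inter> topspace ?X)"
  have "openin ?X U"
    unfolding U_def using \<open>finite J\<close> \<open>p ` J \<subseteq> E\<close> \<open>u \<in> E\<close>
    by (intro openin_Int openin_INT cylinder_open) auto
  moreover have "char_fun E \<xi> \<in> U"
    using closure \<open>u \<in> \<xi>\<close> \<open>u \<in> E\<close> \<open>p ` J \<subseteq> E\<close> \<open>p ` J \<inter> \<xi> = {}\<close>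
    unfolding in_closure_of U_def char_fun_def by auto
  ultimately obtain \<eta> where "is_maximal_filter E \<eta>" and "char_fun E \<eta> \<in> U"
    using closure unfolding in_closure_of by blast
  then show ?thesis
    using \<open>u \<in> E\<close> \<open>p ` J \<subseteq> E\<close> unfolding U_def char_fun_def by (auto simp: image_subset_iff)
qed

locale partial_identities =
  fixes E :: "('a \<rightharpoonup> 'a) set"
  assumes eq_restrict_Some_dom: "e \<in> E \<Longrightarrow> e = Some |` dom e"
    and map_comp_closed: "e \<in> E \<Longrightarrow> f \<in> E \<Longrightarrow> e \<circ>\<^sub>m f \<in> E"
begin

lemma dom_map_comp: "f \<in> E \<Longrightarrow> dom (e \<circ>\<^sub>m f) = dom e \<inter> dom f"
  by (metis eq_restrict_Some_dom map_comp_restrict_Some dom_restrict)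

lemma idem_le_iff_dom_subset: "f \<in> E \<Longrightarrow> idem_le e f \<longleftrightarrow> dom e \<subseteq> dom f"
  by (metis eq_restrict_Some_dom idem_le_restrict_Some_iff)

lemma maximal_filter_separates:
  assumes max: "is_maximal_filter E \<eta>" and "e \<in> E" and "e \<notin> \<eta>" and "h \<in> E"
  shows "\<exists>g\<in>\<eta>. dom e \<inter> dom g \<subseteq> dom h"
proof -
  \<comment> \<open>the filter generated by \<eta> and e; maximality forces it to be improper\<close>
  define F where "F = {k \<in> E. \<exists>g\<in>\<eta>. dom e \<inter> dom g \<subseteq> dom k}"
  have filter: "is_filter E \<eta>" using max by (rule maximal_filter_is_filter)
  have "\<eta> \<subseteq> F" using is_filterD(1)[OF filter] unfolding F_def by blast
  moreover obtain g where "g \<in> \<eta>" using filter by (auto simp: is_filter_def)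
  then have "e \<in> F" using \<open>e \<in> E\<close> unfolding F_def by blast
  ultimately have "\<not> is_filter E F"
    using max \<open>e \<notin> \<eta>\<close> unfolding is_maximal_filter_def by blast
  moreover have "F \<noteq> {}" and "F \<subseteq> E" using \<open>e \<in> F\<close> by (auto simp: F_def)
  moreover have "k \<circ>\<^sub>m k' \<in> F" if kk': "k \<in> F" "k' \<in> F" for k k'
  proof -
    obtain g g' where "g \<in> \<eta>" "g' \<in> \<eta>"
      and dom_k: "dom e \<inter> dom g \<subseteq> dom k" and dom_k': "dom e \<inter> dom g' \<subseteq> dom k'"
      using kk' unfolding F_def by blast
    have "g' \<in> E" and "k' \<in> E" using is_filterD(1)[OF filter] \<open>g' \<in> \<eta>\<close> kk' by (auto simp: F_def)
    then have "dom e \<inter> dom (g \<circ>\<^sub>m g') \<subseteq> dom (k \<circ>\<^sub>m k')"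
      using dom_k dom_k' by (auto simp: dom_map_comp)
    moreover have "g \<circ>\<^sub>m g' \<in> \<eta>" using filter \<open>g \<in> \<eta>\<close> \<open>g' \<in> \<eta>\<close> by (rule is_filterD(3))
    moreover have "k \<circ>\<^sub>m k' \<in> E" using kk' by (simp add: F_def map_comp_closed)
    ultimately show ?thesis unfolding F_def by blast
  qed
  moreover have "k' \<in> F" if "k \<in> F" and "k' \<in> E" and "idem_le k k'" for k k'
  proof -
    obtain g where "g \<in> \<eta>" and "dom e \<inter> dom g \<subseteq> dom k" using \<open>k \<in> F\<close> unfolding F_def by blast
    moreover have "dom k \<subseteq> dom k'" using that by (simp add: idem_le_iff_dom_subset)
    ultimately show ?thesis using \<open>k' \<in> E\<close> unfolding F_def by blast
  qed
  ultimately have "F = E" unfolding is_filter_def by blast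
  then show ?thesis using \<open>h \<in> E\<close> unfolding F_def by blast
qed

lemma maximal_filter_cover:
  assumes max: "is_maximal_filter E \<eta>" and "u \<in> \<eta>" and "finite J" and "p ` J \<subseteq> E"
    and cover: "dom u \<subseteq> (\<Union>j\<in>J. dom (p j))"
  shows "\<exists>j\<in>J. p j \<in> \<eta>"
proof (rule ccontr)
  assume none: "\<not> (\<exists>j\<in>J. p j \<in> \<eta>)"
  have filter: "is_filter E \<eta>" using max by (rule maximal_filter_is_filter)
  have dom_mult: "dom (g \<circ>\<^sub>m g') = dom g \<inter> dom g'" if "g' \<in> \<eta>" for g g'
    using is_filterD(1)[OF filter] that by (simp add: dom_map_comp subset_iff)
  obtain h where "h \<in> E" and "h \<notin> \<eta>" using is_filterD(1,2)[OF filter] by blast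
  have "\<exists>g\<in>\<eta>. \<forall>j\<in>K. dom (p j) \<inter> dom g \<subseteq> dom h" if "K \<subseteq> J" for K
    using finite_subset[OF that \<open>finite J\<close>] that
  proof (induction K rule: finite_induct)
    case empty
    then show ?case using \<open>u \<in> \<eta>\<close> by blast
  next
    case (insert j K)
    then obtain g where "g \<in> \<eta>" and g: "\<forall>i\<in>K. dom (p i) \<inter> dom g \<subseteq> dom h" by blast
    have "j \<in> J" using insert.prems by simp
    then have "p j \<in> E" and "p j \<notin> \<eta>" using none assms(4) by auto
    then obtain g' where "g' \<in> \<eta>" and g': "dom (p j) \<inter> dom g' \<subseteq> dom h"
      using maximal_filter_separates[OF max _ _ \<open>h \<in> E\<close>] by blast
    have "g \<circ>\<^sub>m g' \<in> \<eta>" using filter \<open>g \<in> \<eta>\<close> \<open>g' \<in> \<eta>\<close> by (rule is_filterD(3))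
    moreover have "\<forall>i\<in>insert j K. dom (p i) \<inter> dom (g \<circ>\<^sub>m g') \<subseteq> dom h"
      unfolding dom_mult[OF \<open>g' \<in> \<eta>\<close>] using g g' by blast
    ultimately show ?case by blast
  qed
  then obtain g where "g \<in> \<eta>" and g: "\<forall>j\<in>J. dom (p j) \<inter> dom g \<subseteq> dom h" by blast
  have "g \<circ>\<^sub>m u \<in> \<eta>" using filter \<open>g \<in> \<eta>\<close> \<open>u \<in> \<eta>\<close> by (rule is_filterD(3))
  moreover have "dom (g \<circ>\<^sub>m u) \<subseteq> dom h"
  proof
    fix x assume "x \<in> dom (g \<circ>\<^sub>m u)"
    then have "x \<in> dom g" and "x \<in> dom u" unfolding dom_mult[OF \<open>u \<in> \<eta>\<close>] by blast+
    then obtain j where "j \<in> J" and "x \<in> dom (p j)" using cover by blast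
    with g \<open>x \<in> dom g\<close> show "x \<in> dom h" by blast
  qed
  then have "idem_le (g \<circ>\<^sub>m u) h" using \<open>h \<in> E\<close> by (simp add: idem_le_iff_dom_subset)
  ultimately have "h \<in> \<eta>" using is_filterD(4)[OF filter _ \<open>h \<in> E\<close>] by blast
  with \<open>h \<notin> \<eta>\<close> show False by blast
qed

lemma tight_filter_cover:
  assumes "is_tight_filter E \<xi>" and "u \<in> \<xi>" and "finite J" and "p ` J \<subseteq> E"
    and "dom u \<subseteq> (\<Union>j\<in>J. dom (p j))"
  shows "\<exists>j\<in>J. p j \<in> \<xi>"
proof (rule ccontr)
  assume "\<not> (\<exists>j\<in>J. p j \<in> \<xi>)"
  then have "p ` J \<inter> \<xi> = {}" by blast
  then obtain \<eta> where "is_maximal_filter E \<eta>" and "u \<in> \<eta>" and "p ` J \<inter> \<eta> = {}"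
    using tight_filter_maximal_approximant[OF assms(1-4)] by blast
  then show False using maximal_filter_cover[OF _ _ assms(3-5)] by blast
qed

end

lemma partial_identities_idempotents_S_Lambda:
  assumes "left_cancellative L rng src cmp"
  shows "partial_identities (idempotents (S_Lambda L rng src cmp))"
proof
  fix e assume "e \<in> idempotents (S_Lambda L rng src cmp)"
  with assms show "e = Some |` dom e" by (rule idempotents_S_Lambda_eq_restrict_Some)
next
  fix e f
  assume e: "e \<in> idempotents (S_Lambda L rng src cmp)"
    and f: "f \<in> idempotents (S_Lambda L rng src cmp)"
  have "e \<circ>\<^sub>m f \<in> S_Lambda L rng src cmp"
    using e f by (simp add: idempotents_def S_Lambda.mult)
  moreover have "e \<circ>\<^sub>m f = Some |` (dom e \<inter> dom f)"
    using idempotents_S_Lambda_eq_restrict_Some[OF assms] e f by (metis restrict_Some_map_comp)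
  ultimately show "e \<circ>\<^sub>m f \<in> idempotents (S_Lambda L rng src cmp)"
    by (simp add: idempotents_def restrict_Some_map_comp)
qed

lemma tight_filter_contains_range_idempotent:
  assumes "left_cancellative L rng src cmp"
    and tight: "is_tight_filter (idempotents (S_Lambda L rng src cmp)) \<xi>"
    and "\<forall>j\<in>J. \<alpha> j \<in> S_Lambda L rng src cmp"
    and "\<exists>u\<in>\<xi>. Map.graph u = (\<Union>j\<in>J. Map.graph (\<alpha> j \<circ>\<^sub>m pinv (\<alpha> j)))"
    and "finite J"
  shows "\<exists>j\<in>J. \<alpha> j \<circ>\<^sub>m pinv (\<alpha> j) \<in> \<xi>"
proof -
  interpret partial_identities "idempotents (S_Lambda L rng src cmp)"
    using assms(1) by (rule partial_identities_idempotents_S_Lambda)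
  obtain u where "u \<in> \<xi>" and graph: "Map.graph u = (\<Union>j\<in>J. Map.graph (\<alpha> j \<circ>\<^sub>m pinv (\<alpha> j)))"
    using assms(4) by blast
  show ?thesis
  proof (rule tight_filter_cover[OF tight \<open>u \<in> \<xi>\<close> \<open>finite J\<close>])
    show "(\<lambda>j. \<alpha> j \<circ>\<^sub>m pinv (\<alpha> j)) ` J \<subseteq> idempotents (S_Lambda L rng src cmp)"
      using assms(1,3) S_Lambda_range_idempotent by blast
    show "dom u \<subseteq> (\<Union>j\<in>J. dom (\<alpha> j \<circ>\<^sub>m pinv (\<alpha> j)))"
      using graph_UN_imp_dom_UN[OF graph] by simp
  qed
qed

theorem lemma4p2:
  fixes L :: "'a set" and rng src :: "'a \<Rightarrow> 'a" and cmp :: "'a \<Rightarrow> 'a \<Rightarrow> 'a"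
  assumes "small_category L rng src cmp"
    and "left_cancellative L rng src cmp"
    and "finitely_aligned L rng src cmp"
  shows
   "(\<forall>(t :: 'a \<rightharpoonup> 'a) (\<alpha> :: nat \<Rightarrow> 'a) (\<beta> :: nat \<Rightarrow> 'a) (n :: nat) (j :: nat) e.
       t \<in> S_Lambda L rng src cmp \<longrightarrow>
       (\<forall>i\<in>{1..n}. \<alpha> i \<in> L \<and> \<beta> i \<in> L) \<longrightarrow>
       Map.graph t = (\<Union>i\<in>{1..n}. Map.graph (emb L rng src cmp (\<alpha> i) \<circ>\<^sub>m pinv (emb L rng src cmp (\<beta> i)))) \<longrightarrow>
       j \<in> {1..n} \<longrightarrow>
       e \<in> idempotents (S_Lambda L rng src cmp) \<longrightarrow>
       (let a = emb L rng src cmp (\<alpha> j) \<circ>\<^sub>m pinv (emb L rng src cmp (\<beta> j)) in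
          idem_le e (pinv a \<circ>\<^sub>m a) \<longrightarrow>
          t \<circ>\<^sub>m e \<circ>\<^sub>m pinv t = a \<circ>\<^sub>m e \<circ>\<^sub>m pinv a))
    \<and>
    (\<forall>\<xi> (\<alpha> :: nat \<Rightarrow> ('a \<rightharpoonup> 'a)) (n :: nat).
       is_tight_filter (idempotents (S_Lambda L rng src cmp)) \<xi> \<longrightarrow>
       (\<forall>i\<in>{1..n}. \<alpha> i \<in> S_Lambda L rng src cmp) \<longrightarrow>
       (\<exists>u\<in>\<xi>. Map.graph u = (\<Union>i\<in>{1..n}. Map.graph (\<alpha> i \<circ>\<^sub>m pinv (\<alpha> i)))) \<longrightarrow>
       (\<exists>j\<in>{1..n}. \<alpha> j \<circ>\<^sub>m pinv (\<alpha> j) \<in> \<xi>))"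
proof (intro conjI allI impI)
  fix t :: "'a \<rightharpoonup> 'a" and \<alpha> \<beta> :: "nat \<Rightarrow> 'a" and n j :: nat and e
  let ?a = "emb L rng src cmp (\<alpha> j) \<circ>\<^sub>m pinv (emb L rng src cmp (\<beta> j))"
  assume t: "t \<in> S_Lambda L rng src cmp" and "\<forall>i\<in>{1..n}. \<alpha> i \<in> L \<and> \<beta> i \<in> L"
    and graph: "Map.graph t =
      (\<Union>i\<in>{1..n}. Map.graph (emb L rng src cmp (\<alpha> i) \<circ>\<^sub>m pinv (emb L rng src cmp (\<beta> i))))"
    and j: "j \<in> {1..n}" and e: "e \<in> idempotents (S_Lambda L rng src cmp)"
  show "let a = ?a in idem_le e (pinv a \<circ>\<^sub>m a) \<longrightarrow> t \<circ>\<^sub>m e \<circ>\<^sub>m pinv t = a \<circ>\<^sub>m e \<circ>\<^sub>m pinv a"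
    unfolding Let_def using conjugate_idempotent_by_graph_component[OF assms(2) t graph j e] by blast
next
  fix \<xi> and \<alpha> :: "nat \<Rightarrow> ('a \<rightharpoonup> 'a)" and n :: nat
  assume "is_tight_filter (idempotents (S_Lambda L rng src cmp)) \<xi>"
    and "\<forall>i\<in>{1..n}. \<alpha> i \<in> S_Lambda L rng src cmp"
    and "\<exists>u\<in>\<xi>. Map.graph u = (\<Union>i\<in>{1..n}. Map.graph (\<alpha> i \<circ>\<^sub>m pinv (\<alpha> i)))"
  then show "\<exists>j\<in>{1..n}. \<alpha> j \<circ>\<^sub>m pinv (\<alpha> j) \<in> \<xi>"
    by (rule tight_filter_contains_range_idempotent[OF assms(2)]) simp
qed

end
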